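(* Let $G$ be a Gauss diagram with an over-bridge or under-bridge $v_0,v_1,\dots,v_{k+1}$ ($k\ge1$), and let $G'$ be the Gauss diagram obtained from $G$ by removing every chord having one of $v_1,\dots,v_k$ as an endpoint. Then $g(G)>g(G')$ if and only if there is a cycle of $G$ which, for some $0\le i\ne j\le k$, passes along the circle both from $v_i$ to $v_{i+1}$ and from $v_j$ to $v_{j+1}$.
   Context: A Gauss diagram is an oriented circle together with $n$ signed, oriented chords, each connecting two distinct points of the circle, all $2n$ endpoints being distinct. An over-bridge (resp. under-bridge) of length $k$ of a Gauss diagram is a sequence $v_0,\dots,v_{k+1}$ of consecutive chord endpoints along the oriented circle such that $v_1,\dots,v_k$ are all initial (resp. all terminal) points of their chords. The canonical surface $\Sigma_G$ is obtained from the annulus $S^1\times[0,1]$ by attaching, for each chord, a band to small neighborhoods of its two endpoints in $S^1\times\{0\}$ so that the result is oriented, and then capping every boundary component except $S^1\times\{1\}$ with a disk; $g(G)$ is the genus of $\Sigma_G$. A cycle in $G$ is obtained by starting at an endpoint $x$ of a chord and repeating: (i) move along the current chord to its other endpoint, (ii) move along the circle (in its orientation) to the next chord endpoint $y$, and continue from $y$, until returning to $x$ in step (ii). One has $g(G)=(n-s_G+1)/2$, $s_G$ the number of cycles ($s_G=1$ if there are no chords). *)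

theory Defs
  imports Complex_Main
begin

text \<open>A Gauss diagram is encoded by a finite set P of chord endpoints (natural numbers),
  placed on the oriented circle in increasing order (cyclically), a fixed-point-free
  involution m on P pairing the two endpoints of each chord, and a predicate ini
  marking the initial endpoint of each chord (exactly one per chord).
  Signs of chords play no role in the statement and are omitted.\<close>

definition gauss :: "nat set \<Rightarrow> (nat \<Rightarrow> nat) \<Rightarrow> (nat \<Rightarrow> bool) \<Rightarrow> bool" where
  "gauss P m ini \<longleftrightarrow> finite P \<and>
     (\<forall>p\<in>P. m p \<in> P \<and> m p \<noteq> p \<and> m (m p) = p \<and> (ini p \<longleftrightarrow> \<not> ini (m p)))"

definition nxt :: "nat set \<Rightarrow> nat \<Rightarrow> nat" where
  "nxt P p = (if {q\<in>P. p < q} = {} then Min P else Min {q\<in>P. p < q})"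

definition cstep :: "nat set \<Rightarrow> (nat \<Rightarrow> nat) \<Rightarrow> nat \<Rightarrow> nat" where
  "cstep P m x = nxt P (m x)"

text \<open>A cycle is recorded as the set of endpoints from which iterations start.\<close>
definition cycles :: "nat set \<Rightarrow> (nat \<Rightarrow> nat) \<Rightarrow> nat set set" where
  "cycles P m = {{(cstep P m ^^ i) x | i. True} | x. x \<in> P}"

definition num_cycles :: "nat set \<Rightarrow> (nat \<Rightarrow> nat) \<Rightarrow> nat" where
  "num_cycles P m = (if P = {} then 1 else card (cycles P m))"

text \<open>g(G) = (n - s_G + 1)/2 with n = number of chords = |P|/2.\<close>
definition genus :: "nat set \<Rightarrow> (nat \<Rightarrow> nat) \<Rightarrow> real" where
  "genus P m = (real (card P) / 2 - real (num_cycles P m) + 1) / 2"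

text \<open>Cycle C passes along the circle from endpoint p to the next endpoint nxt P p:
  this happens in step (ii) exactly when the chord move of some iteration lands at p.\<close>
definition passes :: "(nat \<Rightarrow> nat) \<Rightarrow> nat set \<Rightarrow> nat \<Rightarrow> bool" where
  "passes m C p \<longleftrightarrow> (\<exists>x\<in>C. m x = p)"

end

theory Submission
  imports Defs "HOL-Combinatorics.Transposition"
begin

text \<open>
  Write sigma = cstep P m for the cycle step of the diagram, a permutation of the
  endpoints P whose orbits are the cycles. Let v 1, ..., v k be the bridge and w i = m (v i) the
  other endpoints of its chords. Composing sigma with the transpositions of v i and w i for
  i = 1, ..., k gives a permutation rewire k of P that, at a removed endpoint, just moves on along
  the circle. Its orbits therefore correspond to the cycles of the reduced diagram: the cycle step
  of the reduced diagram is the first-return map of rewire k on the kept endpoints Q.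

  Each transposition lowers the number of orbits by at most one, and by exactly one iff it merges
  two orbits. Since the genus is (n - s + 1)/2, the genus drops iff the k transpositions lower the
  number of orbits by less than k, i.e. iff some transposition fails to merge. Following the
  merges, this happens iff the cycles C i through v i, i = 1, ..., k+1, are not pairwise
  distinct; and a cycle passes along the arc from v i to v (i+1) iff it contains v (i+1).
\<close>

section \<open>Orbits of a function\<close>

definition orb :: "('a \<Rightarrow> 'a) \<Rightarrow> 'a \<Rightarrow> 'a set" where
  "orb f x = {(f ^^ i) x | i. True}"

definition orbs :: "('a \<Rightarrow> 'a) \<Rightarrow> 'a set \<Rightarrow> 'a set set" where
  "orbs f P = orb f ` P"

lemma finite_orbs: "finite P \<Longrightarrow> finite (orbs f P)"
  unfolding orbs_def by simp

lemma funpow_closed: "f ` P \<subseteq> P \<Longrightarrow> x \<in> P \<Longrightarrow> (f ^^ i) x \<in> P"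
  by (induction i) auto

lemma orb_subset: "f ` P \<subseteq> P \<Longrightarrow> x \<in> P \<Longrightarrow> orb f x \<subseteq> P"
  unfolding orb_def using funpow_closed[of f P x] by blast

lemma iter_in_orb: "(f ^^ i) x \<in> orb f x"
  unfolding orb_def by auto

lemma self_in_orb: "x \<in> orb f x"
  using iter_in_orb[where i=0] by simp

lemma app_in_orb: "f x \<in> orb f x"
  using iter_in_orb[where i=1] by simp

lemma orb_trans: "y \<in> orb f x \<Longrightarrow> z \<in> orb f y \<Longrightarrow> z \<in> orb f x"
proof -
  assume "y \<in> orb f x" "z \<in> orb f y"
  then obtain i j where "y = (f ^^ i) x" "z = (f ^^ j) y" unfolding orb_def by blast
  then have "z = (f ^^ (j + i)) x" by (simp add: funpow_add)
  then show ?thesis unfolding orb_def by blast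
qed

lemma orb_app: "y \<in> orb f x \<Longrightarrow> f y \<in> orb f x"
  using orb_trans app_in_orb by metis

lemma funpow_returns:
  assumes fin: "finite P" and bij: "bij_betw f P P" and xP: "x \<in> P"
  obtains n where "n > 0" "(f ^^ n) x = x"
proof -
  have maps: "f ` P \<subseteq> P" using bij_betw_imp_surj_on[OF bij] by simp
  have "\<not> inj_on (\<lambda>i. (f ^^ i) x) {0..card P}"
  proof
    assume "inj_on (\<lambda>i. (f ^^ i) x) {0..card P}"
    then have "card ((\<lambda>i. (f ^^ i) x) ` {0..card P}) = Suc (card P)" by (simp add: card_image)
    moreover have "card ((\<lambda>i. (f ^^ i) x) ` {0..card P}) \<le> card P"
      using funpow_closed[OF maps xP] by (intro card_mono[OF fin]) blast
    ultimately show False by simp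
  qed
  then obtain i j where ij: "i < j" "(f ^^ i) x = (f ^^ j) x"
    unfolding inj_on_def by (metis nat_neq_iff)
  have "(f ^^ j) x = (f ^^ (i + (j - i))) x" using ij(1) by simp
  also have "\<dots> = (f ^^ i) ((f ^^ (j - i)) x)" by (simp only: funpow_add comp_apply)
  finally have eq: "(f ^^ i) ((f ^^ (j - i)) x) = (f ^^ i) x" using ij(2) by simp
  have "inj_on (f ^^ i) P" using bij_betw_funpow[OF bij] bij_betw_def by blast
  then have "(f ^^ (j - i)) x = x" using inj_onD[OF _ eq funpow_closed[OF maps xP] xP] by blast
  then show ?thesis using ij(1) that[of "j - i"] by simp
qed

lemma orb_sym:
  assumes "finite P" "bij_betw f P P" "x \<in> P" "y \<in> orb f x"
  shows "x \<in> orb f y"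
proof -
  obtain n where n: "n > 0" "(f ^^ n) x = x" using funpow_returns[OF assms(1-3)] by blast
  obtain i where i: "y = (f ^^ i) x" using assms(4) unfolding orb_def by blast
  have "(f ^^ (n * i - i)) y = (f ^^ (n * i - i + i)) x"
    unfolding i by (simp only: funpow_add comp_apply)
  also have "\<dots> = (f ^^ (n * i)) x" using n(1) by simp
  also have "\<dots> = x" using funpow_mod_eq[where m="n * i", OF n(2)] by simp
  finally show ?thesis using iter_in_orb[where f=f and i="n * i - i" and x=y] by simp
qed

lemma orb_eq:
  assumes "finite P" "bij_betw f P P" "x \<in> P" "y \<in> orb f x"
  shows "orb f y = orb f x"
proof (rule subset_antisym)
  show "orb f y \<subseteq> orb f x" using orb_trans[OF assms(4)] by blast
  show "orb f x \<subseteq> orb f y" using orb_trans[OF orb_sym[OF assms]] by blast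
qed

lemma orb_least:
  assumes "y \<in> orb f x"
  obtains i where "(f ^^ i) x = y" "\<forall>j<i. (f ^^ j) x \<noteq> y"
proof -
  have "\<exists>i. (f ^^ i) x = y" using assms unfolding orb_def by auto
  then show ?thesis using exists_least_iff[of "\<lambda>i. (f ^^ i) x = y"] that by blast
qed

lemma orb_periodic:
  assumes "n > 0" "(f ^^ n) x = x"
  shows "orb f x = {(f ^^ t) x | t. t < n}"
proof
  show "orb f x \<subseteq> {(f ^^ t) x | t. t < n}"
  proof
    fix y assume "y \<in> orb f x"
    then obtain t where "y = (f ^^ t) x" unfolding orb_def by blast
    then have "y = (f ^^ (t mod n)) x" using funpow_mod_eq[OF assms(2)] by simp
    moreover have "t mod n < n" using assms(1) by simp
    ultimately show "y \<in> {(f ^^ t) x | t. t < n}" by blast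
  qed
qed (auto simp: orb_def)

lemma orb_cong:
  assumes "\<forall>x\<in>P. f x = g x" "f ` P \<subseteq> P" "x \<in> P"
  shows "orb f x = orb g x"
proof -
  have "(f ^^ i) x = (g ^^ i) x \<and> (f ^^ i) x \<in> P" for i
    by (induction i) (use assms in auto)
  then show ?thesis unfolding orb_def by auto
qed

section \<open>Composing a permutation with a transposition\<close>

text \<open>Composing a permutation f of a finite set with the transposition of two points a, b
  either merges the orbits of a and b into one (if they differ) or splits their common orbit
  into two.\<close>

lemma bij_comp_transpose:
  assumes "bij_betw f P P" "a \<in> P" "b \<in> P"
  shows "bij_betw (f \<circ> transpose a b) P P"
  using bij_betw_trans[of "transpose a b" P P f P] assms by simp

lemma iter_comp_transpose:
  assumes "\<forall>j<i. (f ^^ j) x \<notin> {a, b}"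
  shows "((f \<circ> transpose a b) ^^ i) x = (f ^^ i) x"
  using assms by (induction i) auto

lemma orb_comp_transpose_avoid:
  assumes "a \<notin> orb f x" "b \<notin> orb f x"
  shows "orb (f \<circ> transpose a b) x = orb f x"
proof -
  have "\<forall>j. (f ^^ j) x \<notin> {a, b}" using assms iter_in_orb[where f=f and x=x] by blast
  then show ?thesis unfolding orb_def by (simp add: iter_comp_transpose)
qed

lemma orb_comp_transpose_reach:
  assumes "b \<in> orb f x" "a \<notin> orb f x"
  shows "b \<in> orb (f \<circ> transpose a b) x"
proof -
  obtain i where i: "(f ^^ i) x = b" "\<forall>j<i. (f ^^ j) x \<noteq> b" using orb_least[OF assms(1)] by blast
  have "\<forall>j<i. (f ^^ j) x \<notin> {a, b}" using i(2) assms(2) iter_in_orb[where f=f and x=x] by blast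
  then have "((f \<circ> transpose a b) ^^ i) x = b" using iter_comp_transpose i(1) by metis
  then show ?thesis using iter_in_orb by metis
qed

text \<open>Merging: if b is not on the orbit of a, then after the transposition every point of
  either orbit leads to a, since the arc into b now continues along the orbit of a and vice versa.\<close>

lemma transpose_merge_reach:
  assumes fin: "finite P" and bij: "bij_betw f P P" and aP: "a \<in> P" and bP: "b \<in> P"
    and nb: "b \<notin> orb f a" and x: "x \<in> orb f a \<union> orb f b"
  shows "a \<in> orb (f \<circ> transpose a b) x"
proof -
  define g where "g = f \<circ> transpose a b"
  have na: "a \<notin> orb f b"
    using orb_eq[OF fin bij bP, of a] nb self_in_orb[where x=b] by blast
  have reach_a: "a \<in> orb g y" if y: "y \<in> orb f a" for y
  proof -
    have "orb f y = orb f a" using orb_eq[OF fin bij aP y] .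
    then have "a \<in> orb f y" "b \<notin> orb f y" using self_in_orb nb by simp_all
    then have "a \<in> orb (f \<circ> transpose b a) y" by (rule orb_comp_transpose_reach)
    then show ?thesis unfolding g_def by (simp add: transpose_commute)
  qed
  have "a \<in> orb g x"
  proof (cases "x \<in> orb f a")
    case True then show ?thesis by (rule reach_a)
  next
    case False
    then have "x \<in> orb f b" using x by simp
    then have "orb f x = orb f b" using orb_eq[OF fin bij bP] by simp
    then have "b \<in> orb f x" "a \<notin> orb f x" using self_in_orb na by simp_all
    then have "b \<in> orb g x" unfolding g_def by (rule orb_comp_transpose_reach)
    moreover have "a \<in> orb g b"
    proof -
      have "g b = f a" unfolding g_def by simp
      then have "f a \<in> orb g b" using app_in_orb by metis
      moreover have "a \<in> orb g (f a)" using reach_a app_in_orb by metis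
      ultimately show ?thesis by (rule orb_trans)
    qed
    ultimately show ?thesis by (rule orb_trans)
  qed
  then show ?thesis unfolding g_def .
qed

lemma transpose_merge_orbits:
  assumes fin: "finite P" and bij: "bij_betw f P P" and aP: "a \<in> P" and bP: "b \<in> P"
    and nb: "b \<notin> orb f a"
  defines "U \<equiv> orb f a \<union> orb f b"
  shows "\<forall>x\<in>U. orb (f \<circ> transpose a b) x = U"
    and "\<forall>x\<in>P - U. orb (f \<circ> transpose a b) x = orb f x"
proof -
  define g where "g = f \<circ> transpose a b"
  have bijg: "bij_betw g P P" unfolding g_def using bij_comp_transpose[OF bij aP bP] .
  have maps: "f ` P \<subseteq> P" using bij_betw_imp_surj_on[OF bij] by simp
  have UP: "U \<subseteq> P" unfolding U_def using orb_subset[OF maps aP] orb_subset[OF maps bP] by blast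
  have aU: "a \<in> U" and bU: "b \<in> U" unfolding U_def by (simp_all add: self_in_orb)
  have closed: "g ` U \<subseteq> U"
  proof
    fix z assume "z \<in> g ` U"
    then obtain y where y: "y \<in> U" "z = g y" by blast
    have "transpose a b y \<in> U" using y(1) aU bU by (auto simp: transpose_def)
    then show "z \<in> U" using y(2) orb_app[where f=f] unfolding U_def g_def by auto
  qed
  have orb_g_a: "orb g a = U"
  proof
    show "orb g a \<subseteq> U" using orb_subset[OF closed aU] .
    show "U \<subseteq> orb g a"
    proof
      fix y assume y: "y \<in> U"
      then have "a \<in> orb g y"
        unfolding g_def U_def by (rule transpose_merge_reach[OF fin bij aP bP nb])
      moreover have "y \<in> P" using UP y by blast
      ultimately show "y \<in> orb g a" using orb_sym[OF fin bijg] by simp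
    qed
  qed
  show "\<forall>x\<in>U. orb (f \<circ> transpose a b) x = U"
  proof
    fix x assume "x \<in> U"
    then have "x \<in> orb g a" using orb_g_a by simp
    then show "orb (f \<circ> transpose a b) x = U" using orb_eq[OF fin bijg aP] orb_g_a
      unfolding g_def by simp
  qed
  show "\<forall>x\<in>P - U. orb (f \<circ> transpose a b) x = orb f x"
  proof
    fix x assume x: "x \<in> P - U"
    have "a \<notin> orb f x"
    proof
      assume "a \<in> orb f x"
      then have "x \<in> orb f a" using orb_sym[OF fin bij] x by simp
      then show False using x unfolding U_def by simp
    qed
    moreover have "b \<notin> orb f x"
    proof
      assume "b \<in> orb f x"
      then have "x \<in> orb f b" using orb_sym[OF fin bij] x by simp
      then show False using x unfolding U_def by simp
    qed
    ultimately show "orb (f \<circ> transpose a b) x = orb f x" by (rule orb_comp_transpose_avoid)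
  qed
qed

lemma transpose_merge_card:
  assumes fin: "finite P" and bij: "bij_betw f P P" and aP: "a \<in> P" and bP: "b \<in> P"
    and nb: "b \<notin> orb f a"
  shows "card (orbs (f \<circ> transpose a b) P) + 1 = card (orbs f P)"
proof -
  define U where "U = orb f a \<union> orb f b"
  define R where "R = orbs f P - {orb f a, orb f b}"
  note inside = transpose_merge_orbits(1)[OF assms, folded U_def]
  note outside = transpose_merge_orbits(2)[OF assms, folded U_def]
  have in_U: "x \<in> U \<longleftrightarrow> orb f x \<in> {orb f a, orb f b}" if "x \<in> P" for x
    using orb_eq[OF fin bij aP, of x] orb_eq[OF fin bij bP, of x] self_in_orb[where x=x]
    unfolding U_def by blast
  have aU: "a \<in> U" unfolding U_def by (simp add: self_in_orb)
  have "orbs (f \<circ> transpose a b) P = insert U R"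
  proof
    show "orbs (f \<circ> transpose a b) P \<subseteq> insert U R"
    proof
      fix Z assume "Z \<in> orbs (f \<circ> transpose a b) P"
      then obtain x where x: "x \<in> P" "Z = orb (f \<circ> transpose a b) x" unfolding orbs_def by blast
      show "Z \<in> insert U R"
      proof (cases "x \<in> U")
        case True then show ?thesis using inside x(2) by simp
      next
        case False
        then have "Z = orb f x" "orb f x \<notin> {orb f a, orb f b}" using outside in_U x by auto
        then show ?thesis using x(1) unfolding R_def orbs_def by blast
      qed
    qed
    show "insert U R \<subseteq> orbs (f \<circ> transpose a b) P"
    proof
      fix Z assume "Z \<in> insert U R"
      then consider "Z = U" | x where "x \<in> P" "Z = orb f x" "orb f x \<notin> {orb f a, orb f b}"
        unfolding R_def orbs_def by blast
      then show "Z \<in> orbs (f \<circ> transpose a b) P"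
      proof cases
        case 1 then show ?thesis using inside aU aP unfolding orbs_def by blast
      next
        case (2 x) then show ?thesis using outside in_U unfolding orbs_def by blast
      qed
    qed
  qed
  moreover have "U \<notin> R"
  proof
    assume "U \<in> R"
    then obtain x where x: "x \<in> P" "U = orb f x" "orb f x \<notin> {orb f a, orb f b}"
      unfolding R_def orbs_def by blast
    then have "x \<in> U" by (simp add: self_in_orb)
    then show False using in_U x by simp
  qed
  moreover have "card R + 2 = card (orbs f P)"
  proof -
    have "orb f a \<noteq> orb f b" using nb self_in_orb by metis
    moreover have "{orb f a, orb f b} \<subseteq> orbs f P" unfolding orbs_def using aP bP by blast
    ultimately show ?thesis
      unfolding R_def using card_Diff_subset[of "{orb f a, orb f b}" "orbs f P"]
        card_mono[OF finite_orbs[OF fin, of f], of "{orb f a, orb f b}"] by simp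
  qed
  ultimately show ?thesis using finite_orbs[OF fin, of f] unfolding R_def by simp
qed

text \<open>The new orbit of a runs from a directly to f b and then along the old orbit back to a,
  skipping the arc from b to a.\<close>

lemma transpose_split_separates:
  assumes fin: "finite P" and bij: "bij_betw f P P" and aP: "a \<in> P"
    and ab: "a \<noteq> b" and b: "b \<in> orb f a"
  shows "b \<notin> orb (f \<circ> transpose a b) a"
proof -
  define g where "g = f \<circ> transpose a b"
  obtain i where i: "(f ^^ i) b = a" "\<forall>j<i. (f ^^ j) b \<noteq> a"
    using orb_least[OF orb_sym[OF fin bij aP b]] by blast
  have i0: "i > 0" using i(1) ab by (cases i) auto
  have no_b: "(f ^^ t) b \<noteq> b" if "0 < t" "t < i" for t
  proof
    assume fixed: "(f ^^ t) b = b"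
    have "(f ^^ i) b = (f ^^ (i - t + t)) b" using that by simp
    also have "\<dots> = (f ^^ (i - t)) ((f ^^ t) b)" by (simp only: funpow_add comp_apply)
    finally have "(f ^^ (i - t)) b = a" using fixed i(1) by simp
    then show False using i(2) that by simp
  qed
  have follow: "(g ^^ Suc t) a = (f ^^ Suc t) b" if "t < i" for t
  proof -
    have "\<forall>j<t. (f ^^ j) (f b) \<notin> {a, b}"
    proof (intro allI impI)
      fix j assume "j < t"
      then have "Suc j < i" using that by simp
      then have "(f ^^ Suc j) b \<noteq> a" "(f ^^ Suc j) b \<noteq> b" using i(2) no_b[of "Suc j"] by blast+
      then have "(f ^^ Suc j) b \<notin> {a, b}" by blast
      then show "(f ^^ j) (f b) \<notin> {a, b}" by (simp add: funpow_swap1)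
    qed
    then have "(g ^^ t) (f b) = (f ^^ t) (f b)" unfolding g_def by (rule iter_comp_transpose)
    moreover have "g a = f b" unfolding g_def by simp
    ultimately show ?thesis by (simp add: funpow_Suc_right del: funpow.simps)
  qed
  have "(g ^^ i) a = a" using follow[of "i - 1"] i(1) i0 by simp
  then have "orb g a = {(g ^^ t) a | t. t < i}" by (rule orb_periodic[OF i0])
  moreover have "(g ^^ t) a \<noteq> b" if "t < i" for t
  proof (cases t)
    case 0 then show ?thesis using ab by simp
  next
    case (Suc s) then show ?thesis using follow[of s] no_b[of t] that by simp
  qed
  ultimately have "b \<notin> orb g a" by auto
  then show ?thesis unfolding g_def .
qed

text \<open>A splitting transposition does not lower the number of orbits: the orbits of a and b
  are new, all orbits not through a are kept.\<close>

lemma transpose_split_card: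
  assumes fin: "finite P" and bij: "bij_betw f P P" and aP: "a \<in> P" and bP: "b \<in> P"
    and ab: "a \<noteq> b" and b: "b \<in> orb f a"
  shows "card (orbs f P) \<le> card (orbs (f \<circ> transpose a b) P)"
proof -
  define g where "g = f \<circ> transpose a b"
  define R where "R = orbs f P - {orb f a}"
  have sep: "orb g a \<noteq> orb g b"
    using transpose_split_separates[OF fin bij aP ab b] self_in_orb unfolding g_def by metis
  have ob: "orb f b = orb f a" using orb_eq[OF fin bij aP b] .
  have other: "a \<notin> orb f x \<and> b \<notin> orb f x" if "x \<in> P" "orb f x \<noteq> orb f a" for x
  proof (intro conjI notI)
    assume "a \<in> orb f x"
    then show False using orb_eq[OF fin bij that(1)] that(2) by simp
  next
    assume "b \<in> orb f x"
    then show False using orb_eq[OF fin bij that(1)] that(2) ob by simp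
  qed
  have "R \<subseteq> orbs g P"
  proof
    fix Z assume "Z \<in> R"
    then obtain x where x: "x \<in> P" "Z = orb f x" "orb f x \<noteq> orb f a" unfolding R_def orbs_def by blast
    then have "Z = orb g x" using other[OF x(1,3)] orb_comp_transpose_avoid unfolding g_def by metis
    then show "Z \<in> orbs g P" using x(1) unfolding orbs_def by blast
  qed
  then have sub: "insert (orb g a) (insert (orb g b) R) \<subseteq> orbs g P"
    using aP bP unfolding orbs_def by blast
  have "orb g c \<notin> R" if "c \<in> {a, b}" for c
  proof
    assume "orb g c \<in> R"
    then obtain x where x: "x \<in> P" "orb g c = orb f x" "orb f x \<noteq> orb f a"
      unfolding R_def orbs_def by blast
    then have "c \<in> orb f x" using self_in_orb[where f=g and x=c] by simp
    then show False using other[OF x(1,3)] that by blast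
  qed
  then have "card (insert (orb g a) (insert (orb g b) R)) = card R + 2"
    using sep finite_orbs[OF fin, of f] unfolding R_def by simp
  moreover have "card R + 1 = card (orbs f P)"
  proof -
    have "orb f a \<in> orbs f P" using aP unfolding orbs_def by blast
    then show ?thesis using card.remove[OF finite_orbs[OF fin, of f]] unfolding R_def by simp
  qed
  ultimately show ?thesis
    using card_mono[OF finite_orbs[OF fin, of g] sub] unfolding g_def by simp
qed

lemma transpose_orbit_count:
  assumes fin: "finite P" and bij: "bij_betw f P P" and aP: "a \<in> P" and bP: "b \<in> P"
    and ab: "a \<noteq> b"
  shows "card (orbs f P) \<le> card (orbs (f \<circ> transpose a b) P) + 1"
    and "card (orbs (f \<circ> transpose a b) P) + 1 = card (orbs f P) \<longleftrightarrow> b \<notin> orb f a"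
proof -
  let ?g = "f \<circ> transpose a b"
  have "card (orbs f P) \<le> card (orbs ?g P) + 1 \<and> (card (orbs ?g P) + 1 = card (orbs f P) \<longleftrightarrow> b \<notin> orb f a)"
  proof (cases "b \<in> orb f a")
    case True
    then show ?thesis using transpose_split_card[OF fin bij aP bP ab True] by simp
  next
    case False
    then show ?thesis using transpose_merge_card[OF fin bij aP bP False] by simp
  qed
  then show "card (orbs f P) \<le> card (orbs ?g P) + 1"
    and "card (orbs ?g P) + 1 = card (orbs f P) \<longleftrightarrow> b \<notin> orb f a" by simp_all
qed

section \<open>Sequences of transpositions\<close>

fun swaps :: "('a \<Rightarrow> 'a) \<Rightarrow> (nat \<Rightarrow> 'a) \<Rightarrow> (nat \<Rightarrow> 'a) \<Rightarrow> nat \<Rightarrow> 'a \<Rightarrow> 'a" where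
  "swaps f a b 0 = f"
| "swaps f a b (Suc j) = swaps f a b j \<circ> transpose (a (Suc j)) (b (Suc j))"

lemma bij_swaps:
  assumes "bij_betw f P P" "\<forall>j\<in>{1..n}. a j \<in> P \<and> b j \<in> P"
  shows "bij_betw (swaps f a b n) P P"
  using assms by (induction n) (auto intro: bij_comp_transpose)

lemma swaps_orbit_count:
  assumes fin: "finite P" and bij: "bij_betw f P P"
    and ab: "\<forall>j\<in>{1..n}. a j \<in> P \<and> b j \<in> P \<and> a j \<noteq> b j"
  shows "card (orbs f P) \<le> card (orbs (swaps f a b n) P) + n \<and>
    (card (orbs (swaps f a b n) P) + n = card (orbs f P) \<longleftrightarrow>
      (\<forall>j\<in>{1..n}. b j \<notin> orb (swaps f a b (j - 1)) (a j)))"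
  using ab
proof (induction n)
  case 0 then show ?case by simp
next
  case (Suc n)
  let ?c = "\<lambda>j. card (orbs (swaps f a b j) P)"
  have IH: "card (orbs f P) \<le> ?c n + n"
    "?c n + n = card (orbs f P) \<longleftrightarrow> (\<forall>j\<in>{1..n}. b j \<notin> orb (swaps f a b (j - 1)) (a j))"
    using Suc by auto
  have bijn: "bij_betw (swaps f a b n) P P"
    by (rule bij_swaps[OF bij]) (use Suc.prems in auto)
  have "a (Suc n) \<in> P" "b (Suc n) \<in> P" "a (Suc n) \<noteq> b (Suc n)" using Suc.prems by auto
  note step = transpose_orbit_count[OF fin bijn this]
  have unfold: "swaps f a b (Suc n) = swaps f a b n \<circ> transpose (a (Suc n)) (b (Suc n))" by simp
  have s1: "?c n \<le> ?c (Suc n) + 1"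
    and s2: "?c (Suc n) + 1 = ?c n \<longleftrightarrow> b (Suc n) \<notin> orb (swaps f a b n) (a (Suc n))"
    unfolding unfold by (fact step)+
  have bound: "card (orbs f P) \<le> ?c (Suc n) + Suc n" using IH(1) s1 by simp
  have "?c (Suc n) + Suc n = card (orbs f P) \<longleftrightarrow>
      ?c n + n = card (orbs f P) \<and> ?c (Suc n) + 1 = ?c n"
    using IH(1) s1 by arith
  moreover have "(\<forall>j\<in>{1..Suc n}. b j \<notin> orb (swaps f a b (j - 1)) (a j)) \<longleftrightarrow>
      (\<forall>j\<in>{1..n}. b j \<notin> orb (swaps f a b (j - 1)) (a j)) \<and> b (Suc n) \<notin> orb (swaps f a b n) (a (Suc n))"
  proof -
    have "{1..Suc n} = insert (Suc n) {1..n}" by auto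
    then show ?thesis by auto
  qed
  ultimately show ?case using bound IH(2) s2 by blast
qed

section \<open>The successor map on the circle\<close>

lemma nxt_gt: "{q\<in>P. y < q} \<noteq> {} \<Longrightarrow> nxt P y = Min {q\<in>P. y < q}"
  unfolding nxt_def by (rule if_not_P)

lemma nxt_wrap: "{q\<in>P. y < q} = {} \<Longrightarrow> nxt P y = Min P"
  unfolding nxt_def by (rule if_P)

lemma nxt_in:
  assumes fin: "finite P" and ne: "P \<noteq> {}"
  shows "nxt P y \<in> P"
proof (cases "{q\<in>P. y < q} = {}")
  case True then show ?thesis using nxt_wrap Min_in[OF fin ne] by metis
next
  case False
  have "Min {q\<in>P. y < q} \<in> {q\<in>P. y < q}" by (rule Min_in) (use False fin in simp_all)
  then show ?thesis using nxt_gt[OF False] by simp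
qed

lemma nxt_iter_in: "finite P \<Longrightarrow> y \<in> P \<Longrightarrow> (nxt P ^^ t) y \<in> P"
  using funpow_closed[of "nxt P" P y t] nxt_in[of P] by blast

lemma nxt_pred:
  assumes fin: "finite P" and uP: "u \<in> P" and nm: "u \<noteq> Min P"
  defines "u' \<equiv> Max {q\<in>P. q < u}"
  shows "u' \<in> P" "u' < u" "nxt P u' = u"
proof -
  have ne: "P \<noteq> {}" using uP by auto
  have "Min P < u" using Min_le[OF fin uP] nm by simp
  then have L: "{q\<in>P. q < u} \<noteq> {}" using Min_in[OF fin ne] by blast
  have fL: "finite {q\<in>P. q < u}" using fin by simp
  have "u' \<in> {q\<in>P. q < u}" unfolding u'_def using Max_in[OF fL L] .
  then show u'P: "u' \<in> P" and less: "u' < u" by simp_all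
  have "Min {q\<in>P. u' < q} = u"
  proof (rule Min_eqI)
    show "finite {q\<in>P. u' < q}" using fin by simp
    show "u \<in> {q\<in>P. u' < q}" using uP less by simp
    fix q assume q: "q \<in> {q\<in>P. u' < q}"
    show "u \<le> q"
    proof (rule ccontr)
      assume "\<not> u \<le> q"
      then have "q \<le> u'" unfolding u'_def using Max_ge[OF fL] q by simp
      then show False using q by simp
    qed
  qed
  moreover have "{q\<in>P. u' < q} \<noteq> {}" using uP less by auto
  ultimately show "nxt P u' = u" using nxt_gt by metis
qed

lemma nxt_bij:
  assumes fin: "finite P"
  shows "bij_betw (nxt P) P P"
proof (cases "P = {}")
  case True then show ?thesis by (simp add: bij_betw_def)
next
  case ne: False
  have "nxt P ` P = P"
  proof
    show "nxt P ` P \<subseteq> P" using nxt_in[OF fin ne] by blast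
    show "P \<subseteq> nxt P ` P"
    proof
      fix u assume uP: "u \<in> P"
      show "u \<in> nxt P ` P"
      proof (cases "u = Min P")
        case True
        have "{q\<in>P. Max P < q} = {}" using fin Max_ge by fastforce
        then have "nxt P (Max P) = u" using True by (simp add: nxt_wrap)
        then show ?thesis using Max_in[OF fin ne] by (metis image_eqI)
      next
        case False then show ?thesis using nxt_pred[OF fin uP False] by (metis image_eqI)
      qed
    qed
  qed
  then show ?thesis unfolding bij_betw_def using finite_surj_inj[OF fin] by simp
qed

lemma nxt_orb:
  assumes fin: "finite P" and xP: "x \<in> P"
  shows "orb (nxt P) x = P"
proof -
  have ne: "P \<noteq> {}" using xP by auto
  have mP: "Min P \<in> P" using Min_in[OF fin ne] .
  have all: "P \<subseteq> orb (nxt P) (Min P)"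
  proof
    fix u assume "u \<in> P"
    then show "u \<in> orb (nxt P) (Min P)"
    proof (induction u rule: less_induct)
      case (less u)
      show ?case
      proof (cases "u = Min P")
        case True then show ?thesis using self_in_orb by simp
      next
        case False
        note pred = nxt_pred[OF fin less.prems False]
        then have "Max {q\<in>P. q < u} \<in> orb (nxt P) (Min P)" using less.IH by simp
        then show ?thesis using orb_app pred(3) by metis
      qed
    qed
  qed
  have "orb (nxt P) (Min P) \<subseteq> P" using orb_subset[OF _ mP] nxt_in[OF fin ne] by blast
  then have "orb (nxt P) (Min P) = P" using all by blast
  moreover have "orb (nxt P) x = orb (nxt P) (Min P)"
    using orb_eq[OF fin nxt_bij[OF fin] mP] all xP by blast
  ultimately show ?thesis by simp
qed

lemma nxt_sub_in:
  assumes fin: "finite P" and QP: "Q \<subseteq> P" and z: "nxt P y \<in> Q"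
  shows "nxt Q y = nxt P y"
proof (cases "{q\<in>P. y < q} = {}")
  case True
  then have zz: "nxt P y = Min P" by (rule nxt_wrap)
  have "{q\<in>Q. y < q} = {}" using True QP by auto
  then have "nxt Q y = Min Q" by (rule nxt_wrap)
  moreover have "Min Q = Min P"
  proof (rule Min_eqI)
    show "finite Q" using fin QP finite_subset by blast
    show "Min P \<in> Q" using z zz by simp
    fix q assume "q \<in> Q" then show "Min P \<le> q" using QP fin by auto
  qed
  ultimately show ?thesis using zz by simp
next
  case False
  have fP: "finite {q\<in>P. y < q}" using fin by simp
  have zz: "nxt P y = Min {q\<in>P. y < q}" using nxt_gt[OF False] .
  have zin: "nxt P y \<in> {q\<in>P. y < q}" unfolding zz using Min_in[OF fP False] .
  have zmin: "\<forall>q\<in>P. y < q \<longrightarrow> nxt P y \<le> q" unfolding zz using Min_le[OF fP] by simp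
  have ne: "{q\<in>Q. y < q} \<noteq> {}" using zin z by auto
  have "Min {q\<in>Q. y < q} = nxt P y"
  proof (rule Min_eqI)
    show "finite {q\<in>Q. y < q}" using finite_subset[OF QP fin] by simp
    show "nxt P y \<in> {q\<in>Q. y < q}" using zin z by simp
    fix q assume "q \<in> {q\<in>Q. y < q}" then show "nxt P y \<le> q" using zmin QP by auto
  qed
  then show ?thesis using nxt_gt[OF ne] by simp
qed

lemma nxt_sub_out:
  assumes fin: "finite P" and QP: "Q \<subseteq> P" and Qne: "Q \<noteq> {}" and z: "nxt P y \<notin> Q"
  shows "nxt Q (nxt P y) = nxt Q y"
proof (cases "{q\<in>P. y < q} = {}")
  case True
  then have zz: "nxt P y = Min P" by (rule nxt_wrap)
  have "{q\<in>Q. y < q} = {}" using True QP by auto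
  then have "nxt Q y = Min Q" by (rule nxt_wrap)
  moreover have "{q\<in>Q. Min P < q} = Q"
  proof -
    have "\<forall>q\<in>Q. Min P \<le> q" using QP fin by auto
    moreover have "Min P \<notin> Q" using z zz by simp
    ultimately show ?thesis using le_neq_implies_less by blast
  qed
  ultimately show ?thesis unfolding zz using Qne nxt_gt[of Q "Min P"] by simp
next
  case False
  have fP: "finite {q\<in>P. y < q}" using fin by simp
  have zz: "nxt P y = Min {q\<in>P. y < q}" using nxt_gt[OF False] .
  have zin: "nxt P y \<in> {q\<in>P. y < q}" unfolding zz using Min_in[OF fP False] .
  have zmin: "\<forall>q\<in>P. y < q \<longrightarrow> nxt P y \<le> q" unfolding zz using Min_le[OF fP] by simp
  have "{q\<in>Q. nxt P y < q} = {q\<in>Q. y < q}"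
  proof
    show "{q\<in>Q. nxt P y < q} \<subseteq> {q\<in>Q. y < q}" using zin by auto
    show "{q\<in>Q. y < q} \<subseteq> {q\<in>Q. nxt P y < q}"
    proof
      fix q assume q: "q \<in> {q\<in>Q. y < q}"
      then have "nxt P y \<le> q" using zmin QP by auto
      moreover have "q \<noteq> nxt P y" using q z by auto
      ultimately show "q \<in> {q\<in>Q. nxt P y < q}" using q by simp
    qed
  qed
  then show ?thesis unfolding nxt_def[of Q] by (simp only:)
qed

lemma nxt_first_hit:
  assumes fin: "finite P" and QP: "Q \<subseteq> P" and Qne: "Q \<noteq> {}"
  obtains j where "j \<ge> 1" "(nxt P ^^ j) y \<in> Q" "\<forall>t. 0 < t \<and> t < j \<longrightarrow> (nxt P ^^ t) y \<notin> Q"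
proof -
  obtain q where q: "q \<in> Q" using Qne by blast
  have yP: "nxt P y \<in> P" using nxt_in[OF fin] QP Qne by blast
  have "q \<in> orb (nxt P) (nxt P y)" using nxt_orb[OF fin yP] q QP by blast
  then obtain s where "q = (nxt P ^^ s) (nxt P y)" unfolding orb_def by blast
  then have "(nxt P ^^ Suc s) y \<in> Q" using q by (simp add: funpow_swap1)
  then have ex: "\<exists>j. 1 \<le> j \<and> (nxt P ^^ j) y \<in> Q" by (intro exI[of _ "Suc s"]) simp
  obtain j where j: "1 \<le> j \<and> (nxt P ^^ j) y \<in> Q" "\<forall>t<j. \<not> (1 \<le> t \<and> (nxt P ^^ t) y \<in> Q)"
    using exists_least_iff[of "\<lambda>j. 1 \<le> j \<and> (nxt P ^^ j) y \<in> Q"] ex by blast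
  show ?thesis using that j by auto
qed

lemma nxt_first:
  assumes fin: "finite P" and QP: "Q \<subseteq> P" and Qne: "Q \<noteq> {}"
  obtains j where "j \<ge> 1" "(nxt P ^^ j) y = nxt Q y"
    "\<forall>t. 0 < t \<and> t < j \<longrightarrow> (nxt P ^^ t) y \<notin> Q"
proof -
  obtain j where j: "j \<ge> 1" "(nxt P ^^ j) y \<in> Q" "\<forall>t. 0 < t \<and> t < j \<longrightarrow> (nxt P ^^ t) y \<notin> Q"
    using nxt_first_hit[OF assms] by blast
  have same: "nxt Q ((nxt P ^^ t) y) = nxt Q y" if "t < j" for t
    using that
  proof (induction t)
    case 0 then show ?case by simp
  next
    case (Suc t)
    then have "nxt Q ((nxt P ^^ t) y) = nxt Q y" "nxt P ((nxt P ^^ t) y) \<notin> Q" using j(3) by auto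
    then show ?case using nxt_sub_out[OF fin QP Qne] by simp
  qed
  have "(nxt P ^^ j) y = nxt P ((nxt P ^^ (j - 1)) y)" using j(1) by (cases j) auto
  then have "nxt Q ((nxt P ^^ (j - 1)) y) = (nxt P ^^ j) y"
    using nxt_sub_in[OF fin QP] j(2) by metis
  then show ?thesis using same[of "j - 1"] j that by simp
qed

section \<open>Counting orbits through a first-return map\<close>

definition first_return :: "('a \<Rightarrow> 'a) \<Rightarrow> 'a set \<Rightarrow> ('a \<Rightarrow> 'a) \<Rightarrow> bool" where
  "first_return \<pi> Q \<sigma> \<longleftrightarrow>
     (\<forall>x\<in>Q. \<exists>j\<ge>1. (\<pi> ^^ j) x = \<sigma> x \<and> (\<forall>t. 0 < t \<and> t < j \<longrightarrow> (\<pi> ^^ t) x \<notin> Q))"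

lemma first_returnE:
  assumes "first_return \<pi> Q \<sigma>" "x \<in> Q"
  obtains j where "j \<ge> 1" "(\<pi> ^^ j) x = \<sigma> x" "\<forall>t. 0 < t \<and> t < j \<longrightarrow> (\<pi> ^^ t) x \<notin> Q"
proof -
  have "\<exists>j\<ge>1. (\<pi> ^^ j) x = \<sigma> x \<and> (\<forall>t. 0 < t \<and> t < j \<longrightarrow> (\<pi> ^^ t) x \<notin> Q)"
    using assms unfolding first_return_def by (rule bspec)
  then show ?thesis using that by blast
qed

lemma first_return_orbit:
  assumes fr: "first_return \<pi> Q \<sigma>" and sQ: "\<sigma> ` Q \<subseteq> Q" and xQ: "x \<in> Q"
  shows "orb \<sigma> x = orb \<pi> x \<inter> Q"
proof
  have step: "\<sigma> y \<in> orb \<pi> y" if yQ: "y \<in> Q" for y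
  proof -
    obtain j where "j \<ge> 1" "(\<pi> ^^ j) y = \<sigma> y" "\<forall>t. 0 < t \<and> t < j \<longrightarrow> (\<pi> ^^ t) y \<notin> Q"
      by (rule first_returnE[OF fr yQ])
    then show ?thesis using iter_in_orb[where f=\<pi> and i=j and x=y] by simp
  qed
  have iter: "(\<sigma> ^^ n) x \<in> orb \<pi> x \<and> (\<sigma> ^^ n) x \<in> Q" for n
  proof (induction n)
    case 0 then show ?case using xQ self_in_orb by simp
  next
    case (Suc n)
    then have "(\<sigma> ^^ n) x \<in> orb \<pi> x" "(\<sigma> ^^ n) x \<in> Q" by simp_all
    moreover have "\<sigma> ((\<sigma> ^^ n) x) \<in> orb \<pi> ((\<sigma> ^^ n) x)" using step calculation(2) .
    ultimately have "\<sigma> ((\<sigma> ^^ n) x) \<in> orb \<pi> x" "\<sigma> ((\<sigma> ^^ n) x) \<in> Q"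
      using orb_trans[of "(\<sigma> ^^ n) x" \<pi> x] sQ by auto
    then show ?case by simp
  qed
  show "orb \<sigma> x \<subseteq> orb \<pi> x \<inter> Q"
  proof
    fix y assume "y \<in> orb \<sigma> x"
    then obtain n where "y = (\<sigma> ^^ n) x" unfolding orb_def by blast
    then show "y \<in> orb \<pi> x \<inter> Q" using iter by simp
  qed
next
  have "\<forall>x\<in>Q. (\<pi> ^^ i) x \<in> Q \<longrightarrow> (\<pi> ^^ i) x \<in> orb \<sigma> x" for i
  proof (induction i rule: less_induct)
    case (less i)
    show ?case
    proof (intro ballI impI)
      fix x assume xQ: "x \<in> Q" and iQ: "(\<pi> ^^ i) x \<in> Q"
      obtain j where j: "j \<ge> 1" "(\<pi> ^^ j) x = \<sigma> x" "\<forall>t. 0 < t \<and> t < j \<longrightarrow> (\<pi> ^^ t) x \<notin> Q"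
        by (rule first_returnE[OF fr xQ])
      show "(\<pi> ^^ i) x \<in> orb \<sigma> x"
      proof (cases "i = 0")
        case True then show ?thesis using self_in_orb by simp
      next
        case False
        have "j \<le> i"
        proof (rule ccontr)
          assume "\<not> j \<le> i"
          then show False using j(3) iQ False by simp
        qed
        then have "(\<pi> ^^ i) x = (\<pi> ^^ (i - j + j)) x" by simp
        also have "\<dots> = (\<pi> ^^ (i - j)) ((\<pi> ^^ j) x)" by (simp only: funpow_add comp_apply)
        finally have e: "(\<pi> ^^ i) x = (\<pi> ^^ (i - j)) (\<sigma> x)" using j(2) by simp
        have "i - j < i" using j(1) False by simp
        moreover have "\<sigma> x \<in> Q" using sQ xQ by blast
        ultimately have "(\<pi> ^^ i) x \<in> orb \<sigma> (\<sigma> x)" using less.IH iQ e by simp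
        then show ?thesis using orb_trans[OF app_in_orb[where f=\<sigma> and x=x]] by simp
      qed
    qed
  qed
  then show "orb \<pi> x \<inter> Q \<subseteq> orb \<sigma> x" using xQ unfolding orb_def[of \<pi>] by auto
qed

text \<open>If moreover every orbit of pi meets Q, intersecting with Q is a bijection between the
  orbits of pi on P and those of the first-return map on Q.\<close>

lemma first_return_card:
  assumes fin: "finite P" and bij: "bij_betw \<pi> P P" and QP: "Q \<subseteq> P"
    and sQ: "\<sigma> ` Q \<subseteq> Q" and fr: "first_return \<pi> Q \<sigma>"
    and meets: "\<forall>x\<in>P. \<exists>t. (\<pi> ^^ t) x \<in> Q"
  shows "card (orbs \<sigma> Q) = card (orbs \<pi> P)"
proof -
  note trace = first_return_orbit[OF fr sQ]
  have meetQ: "\<exists>q. q \<in> orb \<pi> x \<inter> Q" if xP: "x \<in> P" for x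
  proof -
    obtain t where "(\<pi> ^^ t) x \<in> Q" using meets xP by blast
    then show ?thesis using iter_in_orb[where f=\<pi> and i=t and x=x] by blast
  qed
  have same: "orb \<pi> q = orb \<pi> x" if "x \<in> P" "q \<in> orb \<pi> x" for x q
    using orb_eq[OF fin bij that] .
  have "bij_betw (\<lambda>Z. Z \<inter> Q) (orbs \<pi> P) (orbs \<sigma> Q)"
  proof (rule bij_betw_imageI)
    show "inj_on (\<lambda>Z. Z \<inter> Q) (orbs \<pi> P)"
    proof (rule inj_onI)
      fix Z1 Z2 assume "Z1 \<in> orbs \<pi> P" "Z2 \<in> orbs \<pi> P" and e: "Z1 \<inter> Q = Z2 \<inter> Q"
      then obtain x1 x2 where x: "x1 \<in> P" "Z1 = orb \<pi> x1" "x2 \<in> P" "Z2 = orb \<pi> x2"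
        unfolding orbs_def by blast
      obtain q where q: "q \<in> orb \<pi> x1" "q \<in> Q" using meetQ[OF x(1)] by blast
      then have "q \<in> Z2 \<inter> Q" using e x(2) by blast
      then have "q \<in> orb \<pi> x2" using x(4) by simp
      then show "Z1 = Z2" using same[OF x(1) q(1)] same[OF x(3)] x by simp
    qed
    show "(\<lambda>Z. Z \<inter> Q) ` orbs \<pi> P = orbs \<sigma> Q"
    proof
      show "(\<lambda>Z. Z \<inter> Q) ` orbs \<pi> P \<subseteq> orbs \<sigma> Q"
      proof
        fix Y assume "Y \<in> (\<lambda>Z. Z \<inter> Q) ` orbs \<pi> P"
        then obtain x where x: "x \<in> P" "Y = orb \<pi> x \<inter> Q" unfolding orbs_def by blast
        obtain q where q: "q \<in> orb \<pi> x" "q \<in> Q" using meetQ[OF x(1)] by blast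
        then have "Y = orb \<sigma> q" using trace[OF q(2)] same[OF x(1) q(1)] x(2) by simp
        then show "Y \<in> orbs \<sigma> Q" using q(2) unfolding orbs_def by blast
      qed
      show "orbs \<sigma> Q \<subseteq> (\<lambda>Z. Z \<inter> Q) ` orbs \<pi> P"
      proof
        fix Y assume "Y \<in> orbs \<sigma> Q"
        then obtain x where x: "x \<in> Q" "Y = orb \<sigma> x" unfolding orbs_def by blast
        then have "Y = orb \<pi> x \<inter> Q" using trace by simp
        moreover have "orb \<pi> x \<in> orbs \<pi> P" using x(1) QP unfolding orbs_def by blast
        ultimately show "Y \<in> (\<lambda>Z. Z \<inter> Q) ` orbs \<pi> P" by blast
      qed
    qed
  qed
  then show ?thesis by (rule bij_betw_same_card[symmetric])
qed

section \<open>Cycles of a Gauss diagram as orbits\<close>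

lemma cycles_orbs: "cycles P m = orbs (cstep P m) P"
  unfolding cycles_def orbs_def orb_def by auto

lemma num_cycles_orbs: "P \<noteq> {} \<Longrightarrow> num_cycles P m = card (orbs (cstep P m) P)"
  unfolding num_cycles_def cycles_orbs by simp

lemma bij_cstep:
  assumes "gauss P m ini"
  shows "bij_betw (cstep P m) P P"
proof -
  have fin: "finite P" using assms unfolding gauss_def by simp
  have "bij_betw m P P"
    by (rule bij_betw_byWitness[where f'=m]) (use assms in \<open>auto simp: gauss_def\<close>)
  then have "bij_betw (nxt P \<circ> m) P P" using bij_betw_trans nxt_bij[OF fin] by blast
  moreover have "nxt P \<circ> m = cstep P m" by (simp add: fun_eq_iff cstep_def)
  ultimately show ?thesis by simp
qed

section \<open>The chords at a bridge\<close>

text \<open>We fix a Gauss diagram with a bridge v 1, ..., v k following the endpoint p = v 0 on the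
  circle, all of the same orientation. The chord at v i ends at w i = m (v i).\<close>

locale bridge =
  fixes P :: "nat set" and m :: "nat \<Rightarrow> nat" and ini :: "nat \<Rightarrow> bool" and p :: nat and k :: nat
  assumes gauss: "gauss P m ini" and pP: "p \<in> P" and k1: "k \<ge> 1"
    and oriented: "(\<forall>i\<in>{1..k}. ini ((nxt P ^^ i) p)) \<or> (\<forall>i\<in>{1..k}. \<not> ini ((nxt P ^^ i) p))"
begin

definition v :: "nat \<Rightarrow> nat" where "v i = (nxt P ^^ i) p"
definition w :: "nat \<Rightarrow> nat" where "w i = m (v i)"

lemma fin: "finite P" using gauss unfolding gauss_def by simp
lemma m_in: "x \<in> P \<Longrightarrow> m x \<in> P" using gauss unfolding gauss_def by simp
lemma m_m: "x \<in> P \<Longrightarrow> m (m x) = x" using gauss unfolding gauss_def by simp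
lemma m_ini: "x \<in> P \<Longrightarrow> ini (m x) \<longleftrightarrow> \<not> ini x" using gauss unfolding gauss_def by metis

lemma cstep_eq: "cstep P m x = nxt P (m x)" unfolding cstep_def ..

lemma v_in: "v i \<in> P" unfolding v_def using nxt_iter_in[OF fin pP] .
lemma v_Suc: "nxt P (v i) = v (Suc i)" unfolding v_def by simp
lemma w_in: "w i \<in> P" unfolding w_def using m_in v_in by simp
lemma m_w: "m (w i) = v i" unfolding w_def using m_m v_in by simp
lemma cstep_w: "cstep P m (w i) = v (Suc i)" using cstep_eq m_w v_Suc by simp

lemma same_orientation: "i \<in> {1..k} \<Longrightarrow> j \<in> {1..k} \<Longrightarrow> ini (v i) \<longleftrightarrow> ini (v j)"
  using oriented unfolding v_def by blast

lemma w_ne_v: "i \<in> {1..k} \<Longrightarrow> j \<in> {1..k} \<Longrightarrow> w i \<noteq> v j"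
  using same_orientation m_ini[OF v_in] unfolding w_def by metis

text \<open>The bridge points are distinct: if v i = v j with i < j, then nxt P would go around the
  whole circle within the bridge, so the partner m (v 1) of v 1 would be a bridge point with the
  opposite orientation.\<close>

lemma v_inj: "inj_on v {1..k}"
proof (rule linorder_inj_onI')
  fix i j assume i: "i \<in> {1..k}" and j: "j \<in> {1..k}" and ij: "i < j"
  show "v i \<noteq> v j"
  proof
    assume eq: "v i = v j"
    have "(nxt P ^^ (j - i)) (v i) = (nxt P ^^ (j - i + i)) p"
      unfolding v_def by (simp only: funpow_add comp_apply)
    then have per: "(nxt P ^^ (j - i)) (v i) = v i" using eq ij unfolding v_def by simp
    have "m (v 1) \<in> orb (nxt P) (v i)" using nxt_orb[OF fin v_in] m_in[OF v_in] by simp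
    then obtain t where t: "t < j - i" "m (v 1) = (nxt P ^^ t) (v i)"
      using orb_periodic[OF _ per] ij by auto
    have "(nxt P ^^ t) (v i) = v (t + i)" unfolding v_def by (simp only: funpow_add comp_apply)
    then have "m (v 1) = v (t + i)" using t by simp
    moreover have "t + i \<in> {1..k}" "1 \<in> {1..k}" using t i j k1 by auto
    ultimately show False using same_orientation m_ini[OF v_in] by metis
  qed
qed

lemma w_inj: "inj_on w {1..k}"
  using v_inj m_w unfolding inj_on_def by metis

definition removed :: "nat \<Rightarrow> nat set" where
  "removed j = v ` {1..j} \<union> w ` {1..j}"

definition rewire :: "nat \<Rightarrow> nat \<Rightarrow> nat" where
  "rewire j = swaps (cstep P m) v w j"

lemma removed_Suc: "removed (Suc j) = insert (v (Suc j)) (insert (w (Suc j)) (removed j))"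
proof -
  have "{1..Suc j} = insert (Suc j) {1..j}" by auto
  then show ?thesis unfolding removed_def by auto
qed

lemma new_not_removed:
  assumes "Suc j \<le> k"
  shows "v (Suc j) \<notin> removed j" "w (Suc j) \<notin> removed j" "v (Suc j) \<noteq> w (Suc j)"
proof -
  have S: "Suc j \<in> {1..k}" and sub: "{1..j} \<subseteq> {1..k}" using assms by auto
  have "v (Suc j) \<notin> v ` {1..j}" using inj_on_image_mem_iff[OF v_inj S sub] by simp
  moreover have "w (Suc j) \<notin> w ` {1..j}" using inj_on_image_mem_iff[OF w_inj S sub] by simp
  moreover have "v (Suc j) \<notin> w ` {1..j}"
  proof
    assume "v (Suc j) \<in> w ` {1..j}"
    then obtain i where "i \<in> {1..j}" "v (Suc j) = w i" by blast
    then show False using w_ne_v[OF _ S, of i] sub by auto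
  qed
  moreover have "w (Suc j) \<notin> v ` {1..j}"
  proof
    assume "w (Suc j) \<in> v ` {1..j}"
    then obtain i where "i \<in> {1..j}" "w (Suc j) = v i" by blast
    then show False using w_ne_v[OF S, of i] sub by auto
  qed
  ultimately show "v (Suc j) \<notin> removed j" "w (Suc j) \<notin> removed j"
    unfolding removed_def by blast+
  show "v (Suc j) \<noteq> w (Suc j)" using w_ne_v[OF S S] by simp
qed

lemma rewire_eq: "j \<le> k \<Longrightarrow> rewire j x = cstep P m (if x \<in> removed j then m x else x)"
proof (induction j arbitrary: x)
  case 0 then show ?case unfolding rewire_def removed_def by simp
next
  case (Suc j)
  let ?a = "v (Suc j)" and ?b = "w (Suc j)"
  note new = new_not_removed[OF Suc.prems]
  have ma: "m ?a = ?b" unfolding w_def ..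
  have mb: "m ?b = ?a" by (rule m_w)
  have "rewire (Suc j) x = rewire j (transpose ?a ?b x)" unfolding rewire_def by simp
  also have "\<dots> = cstep P m (if x \<in> removed (Suc j) then m x else x)"
    using Suc.IH[of "transpose ?a ?b x"] Suc.prems new ma mb
    by (cases "x = ?a \<or> x = ?b") (auto simp: removed_Suc)
  finally show ?case .
qed

lemma rewire_removed: "x \<in> removed k \<Longrightarrow> rewire k x = nxt P x"
  using rewire_eq[of k x] cstep_eq m_m w_in v_in unfolding removed_def by auto

lemma rewire_kept: "x \<notin> removed k \<Longrightarrow> rewire k x = cstep P m x"
  using rewire_eq[of k x] by simp

lemma bij_rewire: "bij_betw (rewire j) P P"
  unfolding rewire_def using bij_swaps[OF bij_cstep[OF gauss]] v_in w_in by blast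

lemma card_removed: "card (removed k) = 2 * k"
proof -
  have "v ` {1..k} \<inter> w ` {1..k} = {}" using w_ne_v by fastforce
  then have "card (removed k) = card (v ` {1..k}) + card (w ` {1..k})"
    unfolding removed_def by (intro card_Un_disjoint) auto
  also have "\<dots> = 2 * k" using card_image[OF v_inj] card_image[OF w_inj] by simp
  finally show ?thesis .
qed

end

section \<open>The cycles of the reduced diagram\<close>

text \<open>The cycles of
  the reduced diagram correspond to the orbits of rewire k on P: from a kept endpoint, rewire k moves
  along the chord and then along the circle, through removed endpoints, until it reaches Q again,
  which is exactly one cycle step of the reduced diagram.\<close>

context bridge
begin

definition Q :: "nat set" where
  "Q = {q\<in>P. \<forall>i\<in>{1..k}. q \<noteq> v i \<and> m q \<noteq> v i}"

lemma Q_eq: "Q = P - removed k"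
proof -
  have "q \<in> removed k \<longleftrightarrow> (\<exists>i\<in>{1..k}. q = v i \<or> m q = v i)" if qP: "q \<in> P" for q
  proof -
    have "q = w i \<longleftrightarrow> m q = v i" for i using m_m[OF qP] m_w unfolding w_def by metis
    then show ?thesis unfolding removed_def by auto
  qed
  then show ?thesis unfolding Q_def by auto
qed

lemma card_Q: "real (card Q) = real (card P) - 2 * real k"
proof -
  have sub: "removed k \<subseteq> P" unfolding removed_def using v_in w_in by blast
  then have "card (removed k) \<le> card P" using card_mono[OF fin] by blast
  then show ?thesis using card_Diff_subset[OF finite_subset[OF sub fin] sub] card_removed
    unfolding Q_eq by (simp add: of_nat_diff)
qed

lemma rewire_follows_circle:
  assumes yP: "y \<in> P" and out: "\<forall>s<t. (nxt P ^^ s) y \<notin> Q"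
  shows "(rewire k ^^ t) y = (nxt P ^^ t) y"
  using out
proof (induction t)
  case 0 then show ?case by simp
next
  case (Suc t)
  then have "(rewire k ^^ t) y = (nxt P ^^ t) y" by simp
  moreover have "(nxt P ^^ t) y \<in> removed k"
    using Suc.prems nxt_iter_in[OF fin yP] unfolding Q_eq by auto
  ultimately show ?case using rewire_removed by simp
qed

lemma rewire_from_kept:
  assumes xQ: "x \<in> Q" and t: "t \<ge> 1" and out: "\<forall>s. 0 < s \<and> s < t \<longrightarrow> (nxt P ^^ s) (m x) \<notin> Q"
  shows "(rewire k ^^ t) x = (nxt P ^^ t) (m x)"
proof -
  obtain r where r: "t = Suc r" using t by (cases t) auto
  have xP: "x \<in> P" using xQ unfolding Q_eq by simp
  have first: "rewire k x = nxt P (m x)" using xQ rewire_kept cstep_eq unfolding Q_eq by simp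
  have "\<forall>s<r. (nxt P ^^ s) (nxt P (m x)) \<notin> Q"
  proof (intro allI impI)
    fix s assume "s < r"
    then have "0 < Suc s \<and> Suc s < t" using r by simp
    then have "(nxt P ^^ Suc s) (m x) \<notin> Q" using out by blast
    then show "(nxt P ^^ s) (nxt P (m x)) \<notin> Q" by (simp add: funpow_swap1)
  qed
  then have "(rewire k ^^ r) (nxt P (m x)) = (nxt P ^^ r) (nxt P (m x))"
    using rewire_follows_circle[OF nxt_in[OF fin]] xP by blast
  then show ?thesis unfolding r using first by (simp only: funpow_Suc_right comp_apply)
qed

lemma rewire_single_orbit:
  assumes "Q = {}"
  shows "orbs (rewire k) P = {P}"
proof -
  have all_removed: "\<forall>y\<in>P. nxt P y = rewire k y"
  proof
    fix y assume "y \<in> P"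
    then have "y \<in> removed k" using assms unfolding Q_eq by blast
    then show "nxt P y = rewire k y" by (simp add: rewire_removed)
  qed
  have maps: "nxt P ` P \<subseteq> P" using nxt_in[OF fin] by blast
  have "orb (rewire k) x = P" if xP: "x \<in> P" for x
  proof -
    have "orb (nxt P) x = orb (rewire k) x" by (rule orb_cong[OF all_removed maps xP])
    then show ?thesis using nxt_orb[OF fin xP] by simp
  qed
  then have "orbs (rewire k) P = (\<lambda>_. P) ` P" unfolding orbs_def by (rule image_cong[OF refl])
  then show ?thesis using image_constant[OF pP] by simp
qed

lemma rewire_first_return:
  assumes Qne: "Q \<noteq> {}"
  shows "first_return (rewire k) Q (cstep Q m)"
  unfolding first_return_def
proof
  have QP: "Q \<subseteq> P" unfolding Q_eq by blast
  fix x assume xQ: "x \<in> Q"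
  obtain j where j: "j \<ge> 1" "(nxt P ^^ j) (m x) = nxt Q (m x)"
    "\<forall>t. 0 < t \<and> t < j \<longrightarrow> (nxt P ^^ t) (m x) \<notin> Q"
    by (rule nxt_first[OF fin QP Qne])
  have "(rewire k ^^ j) x = cstep Q m x"
    using rewire_from_kept[OF xQ j(1) j(3)] j(2) unfolding cstep_def by simp
  moreover have "(rewire k ^^ t) x \<notin> Q" if "0 < t" "t < j" for t
  proof -
    have before: "\<forall>s. 0 < s \<and> s < t \<longrightarrow> (nxt P ^^ s) (m x) \<notin> Q" using j(3) that by simp
    have "(rewire k ^^ t) x = (nxt P ^^ t) (m x)" using rewire_from_kept[OF xQ _ before] that by simp
    then show ?thesis using j(3) that by simp
  qed
  ultimately show "\<exists>j\<ge>1. (rewire k ^^ j) x = cstep Q m x \<and> (\<forall>t. 0 < t \<and> t < j \<longrightarrow> (rewire k ^^ t) x \<notin> Q)"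
    using j(1) by blast
qed

lemma rewire_meets_kept:
  assumes Qne: "Q \<noteq> {}" and xP: "x \<in> P"
  shows "\<exists>t. (rewire k ^^ t) x \<in> Q"
proof (cases "x \<in> Q")
  case True then show ?thesis by (intro exI[of _ 0]) simp
next
  case False
  have QP: "Q \<subseteq> P" unfolding Q_eq by blast
  obtain j where j: "j \<ge> 1" "(nxt P ^^ j) x \<in> Q" "\<forall>t. 0 < t \<and> t < j \<longrightarrow> (nxt P ^^ t) x \<notin> Q"
    by (rule nxt_first_hit[OF fin QP Qne])
  have "\<forall>s<j. (nxt P ^^ s) x \<notin> Q"
  proof (intro allI impI)
    fix s assume "s < j"
    then show "(nxt P ^^ s) x \<notin> Q" using j(3) False by (cases "s = 0") auto
  qed
  then have "(rewire k ^^ j) x = (nxt P ^^ j) x" by (rule rewire_follows_circle[OF xP])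
  then show ?thesis using j(2) by (intro exI[of _ j]) simp
qed

lemma num_cycles_Q: "num_cycles Q m = card (orbs (rewire k) P)"
proof (cases "Q = {}")
  case True
  then show ?thesis using rewire_single_orbit unfolding num_cycles_def by simp
next
  case False
  have QP: "Q \<subseteq> P" unfolding Q_eq by blast
  have closed: "cstep Q m ` Q \<subseteq> Q"
    unfolding cstep_def using nxt_in[OF finite_subset[OF QP fin] False] by blast
  have "card (orbs (cstep Q m) Q) = card (orbs (rewire k) P)"
    using first_return_card[OF fin bij_rewire QP closed rewire_first_return[OF False]]
      rewire_meets_kept[OF False] by blast
  then show ?thesis using num_cycles_orbs False by simp
qed

lemma genus_less_iff:
  "genus Q m < genus P m \<longleftrightarrow> card (orbs (cstep P m) P) < card (orbs (rewire k) P) + k"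
proof -
  have "P \<noteq> {}" using pP by auto
  then have cP: "num_cycles P m = card (orbs (cstep P m) P)" by (rule num_cycles_orbs)
  show ?thesis unfolding genus_def cP num_cycles_Q card_Q by (simp add: field_simps) linarith
qed

end

section \<open>When do the transpositions merge cycles?\<close>

text \<open>Let C i be the cycle of the diagram through v i. The transposition of v j and w j merges
  two orbits exactly as long as the cycles C 1, ..., C (j+1) are pairwise distinct, because then the
  orbit of v j under rewire (j - 1) is the union of C 1, ..., C j, while w j lies on C (j+1).\<close>

context bridge
begin

definition C :: "nat \<Rightarrow> nat set" where
  "C i = orb (cstep P m) (v i)"

lemma bij_cyc: "bij_betw (cstep P m) P P"
  using bij_cstep[OF gauss] .

lemma C_eq: "x \<in> C i \<Longrightarrow> orb (cstep P m) x = C i"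
  unfolding C_def by (rule orb_eq[OF fin bij_cyc v_in])

lemma v_in_C: "v i \<in> C i"
  unfolding C_def by (rule self_in_orb)

lemma w_in_C: "w i \<in> C (Suc i)"
proof -
  have "v (Suc i) \<in> orb (cstep P m) (w i)" using app_in_orb[of "cstep P m" "w i"] cstep_w by simp
  then show ?thesis unfolding C_def by (rule orb_sym[OF fin bij_cyc w_in])
qed

lemma passes_iff:
  assumes "D \<in> cycles P m"
  shows "passes m D (v i) \<longleftrightarrow> v (Suc i) \<in> D"
proof -
  obtain x0 where x0: "x0 \<in> P" "D = orb (cstep P m) x0"
    using assms unfolding cycles_orbs orbs_def by blast
  show ?thesis
  proof
    assume "passes m D (v i)"
    then obtain x where x: "x \<in> D" "m x = v i" unfolding passes_def by blast
    then have "cstep P m x = v (Suc i)" using cstep_eq v_Suc by simp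
    then show "v (Suc i) \<in> D" using orb_app[of x "cstep P m" x0] x(1) x0(2) by simp
  next
    assume "v (Suc i) \<in> D"
    then have "D = C (Suc i)" using orb_eq[OF fin bij_cyc x0(1)] x0(2) unfolding C_def by simp
    then show "passes m D (v i)" using w_in_C m_w unfolding passes_def by blast
  qed
qed

lemma shared_cycle_iff:
  "(\<exists>D\<in>cycles P m. \<exists>i j. i \<le> k \<and> j \<le> k \<and> i \<noteq> j \<and> passes m D (v i) \<and> passes m D (v j))
    \<longleftrightarrow> \<not> inj_on C {1..Suc k}"
proof
  assume "\<exists>D\<in>cycles P m. \<exists>i j. i \<le> k \<and> j \<le> k \<and> i \<noteq> j \<and> passes m D (v i) \<and> passes m D (v j)"
  then obtain D i j where D: "D \<in> cycles P m" and ij: "i \<le> k" "j \<le> k" "i \<noteq> j"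
    "passes m D (v i)" "passes m D (v j)" by blast
  then have "v (Suc i) \<in> D" "v (Suc j) \<in> D" using passes_iff[OF D] by simp_all
  then have "C (Suc i) = C (Suc j)"
    using C_eq v_in_C orb_eq[OF fin bij_cyc] D unfolding cycles_orbs orbs_def by blast
  moreover have "Suc i \<in> {1..Suc k}" "Suc j \<in> {1..Suc k}" "Suc i \<noteq> Suc j" using ij by auto
  ultimately show "\<not> inj_on C {1..Suc k}" unfolding inj_on_def by blast
next
  assume "\<not> inj_on C {1..Suc k}"
  then obtain i1 i2 where ii: "i1 \<in> {1..Suc k}" "i2 \<in> {1..Suc k}" "i1 \<noteq> i2" "C i1 = C i2"
    unfolding inj_on_def by blast
  have D: "C i1 \<in> cycles P m" unfolding cycles_orbs orbs_def C_def using v_in by blast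
  have "v i1 \<in> C i1" by (rule v_in_C)
  moreover have "v i2 \<in> C i1" using v_in_C[of i2] ii(4) by simp
  ultimately have "passes m (C i1) (v (i1 - 1))" "passes m (C i1) (v (i2 - 1))"
    using passes_iff[OF D] ii(1,2) by simp_all
  moreover have "i1 - 1 \<le> k" "i2 - 1 \<le> k" "i1 - 1 \<noteq> i2 - 1" using ii by auto
  ultimately show "\<exists>D\<in>cycles P m. \<exists>i j. i \<le> k \<and> j \<le> k \<and> i \<noteq> j \<and> passes m D (v i) \<and> passes m D (v j)"
    using D by blast
qed

lemma w_new_cycle:
  assumes "inj_on C {1..Suc (Suc j)}"
  shows "w (Suc j) \<notin> \<Union>(C ` {1..Suc j})"
proof
  assume "w (Suc j) \<in> \<Union>(C ` {1..Suc j})"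
  then obtain i where i: "i \<in> {1..Suc j}" "w (Suc j) \<in> C i" by blast
  then have "C i = C (Suc (Suc j))" using C_eq w_in_C by metis
  moreover have "i \<in> {1..Suc (Suc j)}" "Suc (Suc j) \<in> {1..Suc (Suc j)}" "i \<noteq> Suc (Suc j)"
    using i(1) by auto
  ultimately show False using assms unfolding inj_on_def by blast
qed

lemma merged_orbits:
  assumes "j \<le> k" "inj_on C {1..Suc j}"
  shows "orb (rewire j) (v 1) = \<Union>(C ` {1..Suc j}) \<and>
    (\<forall>x\<in>P - \<Union>(C ` {1..Suc j}). orb (rewire j) x = orb (cstep P m) x)"
  using assms
proof (induction j)
  case 0 then show ?case unfolding rewire_def C_def by simp
next
  case (Suc j)
  let ?U = "\<lambda>j. \<Union>(C ` {1..Suc j})" and ?a = "v (Suc j)" and ?b = "w (Suc j)"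
  have "j \<le> k" using Suc.prems(1) by simp
  moreover have "inj_on C {1..Suc j}" using Suc.prems(2) by (rule inj_on_subset) auto
  ultimately obtain IH1: "orb (rewire j) (v 1) = ?U j"
    and IH2: "\<forall>x\<in>P - ?U j. orb (rewire j) x = orb (cstep P m) x"
    using Suc.IH by blast
  have "Suc j \<in> {1..Suc j}" by simp
  then have "?a \<in> ?U j" using v_in_C by blast
  then have "?a \<in> orb (rewire j) (v 1)" using IH1 by simp
  then have "orb (rewire j) ?a = orb (rewire j) (v 1)" by (rule orb_eq[OF fin bij_rewire v_in])
  then have orb_a: "orb (rewire j) ?a = ?U j" using IH1 by simp
  have bU: "?b \<notin> ?U j" using w_new_cycle[OF Suc.prems(2)] .
  then have orb_b: "orb (rewire j) ?b = C (Suc (Suc j))"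
    using IH2 w_in C_eq[OF w_in_C] by simp
  have U: "orb (rewire j) ?a \<union> orb (rewire j) ?b = ?U (Suc j)"
  proof -
    have "{1..Suc (Suc j)} = insert (Suc (Suc j)) {1..Suc j}" by auto
    then show ?thesis using orb_a orb_b by auto
  qed
  have "?b \<notin> orb (rewire j) ?a" using orb_a bU by simp
  note merge = transpose_merge_orbits[OF fin bij_rewire v_in w_in this, unfolded U]
  have step: "rewire (Suc j) = rewire j \<circ> transpose ?a ?b" unfolding rewire_def by simp
  have "1 \<in> {1..Suc (Suc j)}" by simp
  then have "v 1 \<in> ?U (Suc j)" using v_in_C by blast
  then have "orb (rewire (Suc j)) (v 1) = ?U (Suc j)" unfolding step by (rule bspec[OF merge(1)])
  moreover have "orb (rewire (Suc j)) x = orb (cstep P m) x" if "x \<in> P - ?U (Suc j)" for x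
  proof -
    have "x \<in> P - ?U j" using that by auto
    then show ?thesis using merge(2) that IH2 step by simp
  qed
  ultimately show ?case by blast
qed

lemma merge_step_iff:
  assumes "Suc n \<le> k" "inj_on C {1..Suc n}"
  shows "w (Suc n) \<notin> orb (rewire n) (v (Suc n)) \<longleftrightarrow> C (Suc (Suc n)) \<notin> C ` {1..Suc n}"
proof -
  have "Suc n \<in> {1..Suc n}" by simp
  then have "v (Suc n) \<in> \<Union>(C ` {1..Suc n})" using v_in_C by blast
  moreover have U: "orb (rewire n) (v 1) = \<Union>(C ` {1..Suc n})"
    using merged_orbits[of n] assms by simp
  ultimately have "v (Suc n) \<in> orb (rewire n) (v 1)" by simp
  then have "orb (rewire n) (v (Suc n)) = orb (rewire n) (v 1)" by (rule orb_eq[OF fin bij_rewire v_in])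
  then have "orb (rewire n) (v (Suc n)) = \<Union>(C ` {1..Suc n})" using U by simp
  moreover have "w (Suc n) \<in> C i \<longleftrightarrow> C (Suc (Suc n)) = C i" for i
    using C_eq w_in_C by metis
  ultimately show ?thesis by auto
qed

lemma all_merge_iff:
  "n \<le> k \<Longrightarrow> (\<forall>j\<in>{1..n}. w j \<notin> orb (rewire (j - 1)) (v j)) \<longleftrightarrow> inj_on C {1..Suc n}"
proof (induction n)
  case 0 then show ?case by simp
next
  case (Suc n)
  have split: "{1..Suc n} = insert (Suc n) {1..n}" "{1..Suc (Suc n)} = insert (Suc (Suc n)) {1..Suc n}"
    by auto
  show ?case
  proof (cases "inj_on C {1..Suc n}")
    case True
    then show ?thesis using Suc merge_step_iff[OF Suc.prems True] unfolding split by auto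
  next
    case False
    then have "\<not> inj_on C {1..Suc (Suc n)}" using inj_on_subset by fastforce
    then show ?thesis using Suc False unfolding split by auto
  qed
qed

lemma genus_drop_iff:
  "genus Q m < genus P m \<longleftrightarrow>
    (\<exists>D\<in>cycles P m. \<exists>i j. i \<le> k \<and> j \<le> k \<and> i \<noteq> j \<and> passes m D (v i) \<and> passes m D (v j))"
proof -
  have "\<forall>j\<in>{1..k}. v j \<in> P \<and> w j \<in> P \<and> v j \<noteq> w j"
  proof
    fix j assume "j \<in> {1..k}"
    then show "v j \<in> P \<and> w j \<in> P \<and> v j \<noteq> w j" using v_in w_in w_ne_v[of j j] by auto
  qed
  from swaps_orbit_count[OF fin bij_cyc this]
  have "card (orbs (cstep P m) P) \<le> card (orbs (rewire k) P) + k"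
    and "card (orbs (rewire k) P) + k = card (orbs (cstep P m) P) \<longleftrightarrow> inj_on C {1..Suc k}"
    using all_merge_iff[of k] unfolding rewire_def by auto
  then have "genus Q m < genus P m \<longleftrightarrow> \<not> inj_on C {1..Suc k}"
    unfolding genus_less_iff by linarith
  then show ?thesis using shared_cycle_iff by simp
qed

end

theorem mainTheorem7:
  fixes P :: "nat set" and m :: "nat \<Rightarrow> nat" and ini :: "nat \<Rightarrow> bool"
    and p :: nat and k :: nat
  assumes "gauss P m ini"
    and "p \<in> P"
    and "k \<ge> 1"
    and "(\<forall>i\<in>{1..k}. ini ((nxt P ^^ i) p)) \<or> (\<forall>i\<in>{1..k}. \<not> ini ((nxt P ^^ i) p))"
  shows "genus P m > genus {q\<in>P. \<forall>i\<in>{1..k}. q \<noteq> (nxt P ^^ i) p \<and> m q \<noteq> (nxt P ^^ i) p} m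
     \<longleftrightarrow> (\<exists>C\<in>cycles P m. \<exists>i j. i \<le> k \<and> j \<le> k \<and> i \<noteq> j \<and>
            passes m C ((nxt P ^^ i) p) \<and> passes m C ((nxt P ^^ j) p))"
proof -
  interpret bridge P m ini p k using assms by unfold_locales
  show ?thesis using genus_drop_iff unfolding Q_def v_def by simp
qed
end
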